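(* Let $F$ be a tree ensemble with input dimension $n$ and output dimension $1$, let $V_f$ be a set of variables referenced by $F$, let $\bar c=(c_1,\dots,c_n)\in\mathcal D^n$ and $d=f_{bin}(\bar c;F)$. Let $I\subseteq\{1,\dots,n\}$ be the set returned by the following procedure: set $S=\emptyset$ and $\hat x_i=\alpha(\{c_i\})$ for all $i$; for $i=1,\dots,n$ in order: set $\hat x_i=\top$; if $i\in V_f$, then if $\mathrm{Valid}(\hat x_1,\dots,\hat x_n)$ holds put $S:=S\cup\{i\}$, and otherwise reset $\hat x_i=\alpha(\{c_i\})$; finally return $I=V_f\setminus S$. Here $\mathrm{Valid}(\hat x_1,\dots,\hat x_n)$ holds iff $f_{bin}(\bar x;F)=d$ for every $\bar x\in\gamma(\hat x_1)\times\dots\times\gamma(\hat x_n)$. Then $E=\{(x_i,c_i):i\in I\}$ is a minimal explanation for the prediction $f_{bin}(\bar c;F)=d$: $E$ is valid, and no proper subset of $E$ is valid.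
   Context: $\mathcal{D}\subset\mathbb{R}$ is a fixed finite nonempty set. For nonempty $V\subseteq\mathcal D$, $\alpha(V)=[\min V,\max V]$, and $\gamma([l,u])=\{v\in\mathcal D:l\le v\le u\}$; $\top=\alpha(\mathcal D)$, so $\gamma(\top)=\mathcal D$ and $\gamma(\alpha(\{c\}))=\{c\}$. Decision tree $T=\{(X_1,y_1),\dots,(X_k,y_k)\}$: $X_1,\dots,X_k$ partition $\mathcal D^n$, $y_j\in\mathbb R$, $t(\bar x;T)=y_j$ iff $\bar x\in X_j$. Tree ensemble $F=(T_1,\dots,T_b)$: $f(\bar x;F)=\sum_i t(\bar x;T_i)$. Binary classifier: $f_{bin}(\bar x;F)=1$ if $1/(1+e^{-f(\bar x;F)})>0.5$, else $0$. Variables referenced: $V_f\subseteq\{1,\dots,n\}$ is such that, for every tree of $F$ and every leaf region $X_j$, membership $\bar x\in X_j$ does not depend on the coordinates $x_i$ with $i\notin V_f$ (i.e. $V_f$ contains the union of the coordinates tested by the decision rules of the trees). Valid explanation: $E\subseteq\{(x_1,c_1),\dots,(x_n,c_n)\}$ is valid for the prediction $f_{bin}(\bar c;F)=d$ iff every $\bar x\in\mathcal D^n$ with $x_i=c_i$ for all $(x_i,c_i)\in E$ satisfies $f_{bin}(\bar x;F)=d$. A valid explanation is minimal iff none of its proper subsets is valid. *)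

theory Defs
  imports "HOL-Library.FuncSet" Complex_Main
begin

definition points :: "real set \<Rightarrow> nat \<Rightarrow> (nat \<Rightarrow> real) set" where
  "points D n = PiE {1..n} (\<lambda>_. D)"

type_synonym ival = "real \<times> real"

definition alpha :: "real set \<Rightarrow> ival" where
  "alpha V = (Min V, Max V)"

definition gamma :: "real set \<Rightarrow> ival \<Rightarrow> real set" where
  "gamma D I = {v \<in> D. fst I \<le> v \<and> v \<le> snd I}"

definition top_iv :: "real set \<Rightarrow> ival" where
  "top_iv D = alpha D"

text \<open>A decision tree: a list of leaves (X_j, y_j) whose regions partition D^n.\<close>
type_synonym tree = "((nat \<Rightarrow> real) set \<times> real) list"

definition is_tree :: "real set \<Rightarrow> nat \<Rightarrow> tree \<Rightarrow> bool" where
  "is_tree D n T \<longleftrightarrow>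
     (\<forall>j < length T. fst (T ! j) \<noteq> {} \<and> fst (T ! j) \<subseteq> points D n) \<and>
     (\<forall>j < length T. \<forall>k < length T. j \<noteq> k \<longrightarrow> fst (T ! j) \<inter> fst (T ! k) = {}) \<and>
     (\<Union>j < length T. fst (T ! j)) = points D n"

definition tree_val :: "(nat \<Rightarrow> real) \<Rightarrow> tree \<Rightarrow> real" where
  "tree_val x T = (THE y. \<exists>j < length T. x \<in> fst (T ! j) \<and> y = snd (T ! j))"

definition ens_val :: "(nat \<Rightarrow> real) \<Rightarrow> tree list \<Rightarrow> real" where
  "ens_val x F = (\<Sum>i < length F. tree_val x (F ! i))"

definition fbin :: "(nat \<Rightarrow> real) \<Rightarrow> tree list \<Rightarrow> nat" where
  "fbin x F = (if 1 / (1 + exp (- ens_val x F)) > 0.5 then 1 else 0)"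

definition referenced :: "real set \<Rightarrow> nat \<Rightarrow> tree list \<Rightarrow> nat set \<Rightarrow> bool" where
  "referenced D n F Vf \<longleftrightarrow> Vf \<subseteq> {1..n} \<and>
     (\<forall>T \<in> set F. \<forall>j < length T. \<forall>x \<in> points D n. \<forall>x' \<in> points D n.
        (\<forall>i \<in> Vf. x i = x' i) \<longrightarrow> (x \<in> fst (T ! j) \<longleftrightarrow> x' \<in> fst (T ! j)))"

definition Valid :: "real set \<Rightarrow> nat \<Rightarrow> tree list \<Rightarrow> nat \<Rightarrow> (nat \<Rightarrow> ival) \<Rightarrow> bool" where
  "Valid D n F d xh \<longleftrightarrow> (\<forall>x \<in> PiE {1..n} (\<lambda>i. gamma D (xh i)). fbin x F = d)"

definition proc_step :: "real set \<Rightarrow> nat \<Rightarrow> tree list \<Rightarrow> nat \<Rightarrow> nat set \<Rightarrow> (nat \<Rightarrow> real)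
    \<Rightarrow> nat set \<times> (nat \<Rightarrow> ival) \<Rightarrow> nat \<Rightarrow> nat set \<times> (nat \<Rightarrow> ival)" where
  "proc_step D n F d Vf c st i =
     (let S = fst st; xh' = (snd st)(i := top_iv D) in
      if i \<in> Vf then
        (if Valid D n F d xh' then (S \<union> {i}, xh')
         else (S, xh'(i := alpha {c i})))
      else (S, xh'))"

definition procedure :: "real set \<Rightarrow> nat \<Rightarrow> tree list \<Rightarrow> nat set \<Rightarrow> (nat \<Rightarrow> real) \<Rightarrow> nat set" where
  "procedure D n F Vf c =
     (let d = fbin c F;
          st = foldl (proc_step D n F d Vf c) ({}, \<lambda>i. alpha {c i}) [1..<n+1]
      in Vf - fst st)"

text \<open>Explanations: sets of pairs (i, c_i), meaning feature x_i fixed to c_i.\<close>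
definition valid_expl :: "real set \<Rightarrow> nat \<Rightarrow> tree list \<Rightarrow> nat \<Rightarrow> (nat \<times> real) set \<Rightarrow> bool" where
  "valid_expl D n F d E \<longleftrightarrow>
     (\<forall>x \<in> points D n. (\<forall>(i, v) \<in> E. x i = v) \<longrightarrow> fbin x F = d)"

definition minimal_expl :: "real set \<Rightarrow> nat \<Rightarrow> tree list \<Rightarrow> nat \<Rightarrow> (nat \<times> real) set \<Rightarrow> bool" where
  "minimal_expl D n F d E \<longleftrightarrow> valid_expl D n F d E \<and>
     (\<forall>E' \<subset> E. \<not> valid_expl D n F d E')"

end

theory Submission
  imports Defs
begin

text \<open>After k steps the abstract state is a box: the coordinates among 1..k that are
  unreferenced or were put into S are \<top>, all others are pinned to c, and Valid of such a box
  means that the explanation pinning exactly those coordinates is valid. Freeing an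
  unreferenced coordinate cannot change the prediction, so this validity is invariant.
  A referenced coordinate i is kept only if unpinning it at that moment breaks validity;
  since the pinned set only shrinks afterwards and validity is monotone in the explanation,
  unpinning i from the final explanation breaks validity as well, which is minimality.\<close>

definition expl :: "(nat \<Rightarrow> real) \<Rightarrow> nat set \<Rightarrow> (nat \<times> real) set" where
  "expl c I = {(i, c i) | i. i \<in> I}"

definition box :: "real set \<Rightarrow> (nat \<Rightarrow> real) \<Rightarrow> nat set \<Rightarrow> nat \<Rightarrow> ival" where
  "box D c U = (\<lambda>j. if j \<in> U then top_iv D else alpha {c j})"

definition freed :: "nat set \<Rightarrow> nat set \<Rightarrow> nat \<Rightarrow> nat set" where
  "freed Vf S k = {1..k} - (Vf - S)"

lemma valid_expl_mono:
  "valid_expl D n F d E \<Longrightarrow> E \<subseteq> E' \<Longrightarrow> valid_expl D n F d E'"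
  unfolding valid_expl_def by (auto simp: case_prod_beta)

lemma expl_mono: "I \<subseteq> J \<Longrightarrow> expl c I \<subseteq> expl c J"
  unfolding expl_def by blast

lemma valid_expl_expl_iff:
  "valid_expl D n F d (expl c I) \<longleftrightarrow>
     (\<forall>x \<in> points D n. (\<forall>i \<in> I. x i = c i) \<longrightarrow> fbin x F = d)"
  unfolding valid_expl_def expl_def by auto

lemma minimal_expl_if_removals_invalid:
  assumes "valid_expl D n F d E" and "\<And>p. p \<in> E \<Longrightarrow> \<not> valid_expl D n F d (E - {p})"
  shows "minimal_expl D n F d E"
  unfolding minimal_expl_def
proof (intro conjI allI impI notI)
  fix E' assume "E' \<subset> E" and "valid_expl D n F d E'"
  then obtain p where "p \<in> E" "E' \<subseteq> E - {p}"
    by blast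
  then show False
    using assms(2) valid_expl_mono[OF \<open>valid_expl D n F d E'\<close>] by blast
qed (fact assms(1))

lemma expl_Diff_singleton: "expl c I - {(i, c i)} = expl c (I - {i})"
  unfolding expl_def by blast

lemma fbin_eq_if_agree_on_referenced:
  assumes "referenced D n F Vf" "x \<in> points D n" "x' \<in> points D n" "\<forall>i \<in> Vf. x i = x' i"
  shows "fbin x F = fbin x' F"
proof -
  have "tree_val x T = tree_val x' T" if "T \<in> set F" for T
  proof -
    have "\<forall>j < length T. x \<in> fst (T ! j) \<longleftrightarrow> x' \<in> fst (T ! j)"
      using assms that unfolding referenced_def by blast
    then show ?thesis
      unfolding tree_val_def by (intro arg_cong[where f = The] ext) blast
  qed
  then have "ens_val x F = ens_val x' F"
    unfolding ens_val_def by (intro sum.cong) auto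
  then show ?thesis unfolding fbin_def by simp
qed

lemma valid_expl_restrict_referenced:
  assumes ref: "referenced D n F Vf" and c: "c \<in> points D n"
    and valid: "valid_expl D n F d (expl c I)"
  shows "valid_expl D n F d (expl c (I \<inter> Vf))"
  unfolding valid_expl_expl_iff
proof (intro ballI impI)
  fix x assume x: "x \<in> points D n" and agree: "\<forall>i \<in> I \<inter> Vf. x i = c i"
  define x' where "x' = (\<lambda>j. if j \<in> I then c j else x j)"
  have x': "x' \<in> points D n"
    using x c unfolding x'_def points_def by (auto simp: PiE_iff extensional_def)
  have "fbin x F = fbin x' F"
    using fbin_eq_if_agree_on_referenced[OF ref x x'] agree by (auto simp: x'_def)
  also have "\<dots> = d"
    using valid x' unfolding valid_expl_expl_iff x'_def by auto
  finally show "fbin x F = d" .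
qed

lemma valid_expl_fix_all:
  assumes "c \<in> points D n"
  shows "valid_expl D n F (fbin c F) (expl c {1..n})"
  unfolding valid_expl_expl_iff
proof (intro ballI impI)
  fix x assume "x \<in> points D n" "\<forall>i \<in> {1..n}. x i = c i"
  with assms have "x = c"
    unfolding points_def by (intro extensionalityI[of _ "{1..n}"]) (auto simp: PiE_iff)
  then show "fbin x F = fbin c F" by simp
qed

lemma Valid_box_iff:
  assumes "finite D" "D \<noteq> {}" "c \<in> points D n"
  shows "Valid D n F d (box D c U) \<longleftrightarrow> valid_expl D n F d (expl c ({1..n} - U))"
proof -
  have "gamma D (box D c U i) = (if i \<in> U then D else {c i})" if "i \<in> {1..n}" for i
    using assms that
    by (auto simp: box_def gamma_def top_iv_def alpha_def points_def PiE_iff)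
  then have "PiE {1..n} (\<lambda>i. gamma D (box D c U i)) = PiE {1..n} (\<lambda>i. if i \<in> U then D else {c i})"
    by (intro PiE_cong) auto
  also have "\<dots> = {x \<in> points D n. \<forall>i \<in> {1..n} - U. x i = c i}"
    using assms(3) unfolding points_def
    by (simp add: set_eq_iff PiE_iff) (metis Diff_iff)
  finally have "PiE {1..n} (\<lambda>i. gamma D (box D c U i))
      = {x \<in> points D n. \<forall>i \<in> {1..n} - U. x i = c i}" .
  then show ?thesis
    unfolding Valid_def valid_expl_expl_iff by auto
qed

lemma proc_step_box:
  assumes "i \<notin> U"
  shows "proc_step D n F d Vf c (S, box D c U) i =
    (if i \<in> Vf \<and> \<not> Valid D n F d (box D c (insert i U)) then (S, box D c U)
     else (if i \<in> Vf then insert i S else S, box D c (insert i U)))"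
proof -
  have "(box D c U)(i := top_iv D) = box D c (insert i U)"
    by (auto simp: box_def)
  moreover have "(box D c (insert i U))(i := alpha {c i}) = box D c U"
    using assms by (auto simp: box_def)
  ultimately show ?thesis
    unfolding proc_step_def by (simp add: Let_def)
qed

definition proc_inv ::
    "real set \<Rightarrow> nat \<Rightarrow> tree list \<Rightarrow> nat \<Rightarrow> nat set \<Rightarrow> (nat \<Rightarrow> real) \<Rightarrow> nat \<Rightarrow> nat set \<Rightarrow> bool"
  where
  "proc_inv D n F d Vf c k S \<longleftrightarrow> S \<subseteq> Vf \<inter> {1..k} \<and>
     valid_expl D n F d (expl c ({1..n} - freed Vf S k)) \<and>
     (\<forall>i \<in> Vf \<inter> {1..k} - S.
        \<not> valid_expl D n F d (expl c ({1..n} - freed Vf S k - {i})))"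

lemma proc_inv_step:
  assumes fin: "finite D" "D \<noteq> {}" and ref: "referenced D n F Vf" and c: "c \<in> points D n"
    and inv: "proc_inv D n F d Vf c k S"
  obtains S' where
    "proc_step D n F d Vf c (S, box D c (freed Vf S k)) (Suc k)
       = (S', box D c (freed Vf S' (Suc k)))"
    "proc_inv D n F d Vf c (Suc k) S'"
proof -
  let ?U = "freed Vf S k" and ?i = "Suc k"
  let ?valid = "\<lambda>I. valid_expl D n F d (expl c I)"
  have S: "S \<subseteq> Vf \<inter> {1..k}" and valid: "?valid ({1..n} - ?U)"
    and rejected: "\<And>j. j \<in> Vf \<inter> {1..k} - S \<Longrightarrow> \<not> ?valid ({1..n} - ?U - {j})"
    using inv unfolding proc_inv_def by auto
  have rejected_later: "\<not> ?valid ({1..n} - U' - {j})"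
    if "j \<in> Vf \<inter> {1..k} - S" "?U \<subseteq> U'" for j U'
  proof
    assume "?valid ({1..n} - U' - {j})"
    then have "?valid ({1..n} - ?U - {j})"
      by (rule valid_expl_mono[OF _ expl_mono]) (use that in auto)
    then show False
      using rejected[OF that(1)] by blast
  qed
  have rejected_after_insert:
    "\<And>j. j \<in> Vf \<inter> {1..k} - S \<Longrightarrow> \<not> ?valid ({1..n} - insert ?i ?U - {j})"
    using rejected_later by blast
  have i_new: "?i \<notin> ?U" by (simp add: freed_def)
  have pinned_insert: "{1..n} - insert ?i ?U = {1..n} - ?U - {?i}"
    by blast
  have Valid_insert: "Valid D n F d (box D c (insert ?i ?U)) \<longleftrightarrow> ?valid ({1..n} - ?U - {?i})"
    using Valid_box_iff[OF fin c, of F d "insert ?i ?U"] by (simp only: pinned_insert)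
  note step = proc_step_box[OF i_new, of D n F d Vf c S]
  consider (unreferenced) "?i \<notin> Vf" | (accepted) "?i \<in> Vf" "?valid ({1..n} - ?U - {?i})"
    | (rejected_now) "?i \<in> Vf" "\<not> ?valid ({1..n} - ?U - {?i})"
    by blast
  then show thesis
  proof cases
    case unreferenced
    have U': "freed Vf S ?i = insert ?i ?U"
      using unreferenced by (auto simp: freed_def)
    have "?valid (({1..n} - ?U) \<inter> Vf)"
      by (rule valid_expl_restrict_referenced[OF ref c valid])
    then have "?valid ({1..n} - freed Vf S ?i)"
      by (rule valid_expl_mono[OF _ expl_mono]) (auto simp: U' unreferenced)
    moreover have "Vf \<inter> {1..?i} - S = Vf \<inter> {1..k} - S"
      using unreferenced by (auto simp: le_Suc_eq)
    ultimately have "proc_inv D n F d Vf c ?i S"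
      using S rejected_after_insert unfolding proc_inv_def U' by auto
    then show thesis
      using that[of S] step unreferenced U' by simp
  next
    case accepted
    have U': "freed Vf (insert ?i S) ?i = insert ?i ?U"
      by (auto simp: freed_def)
    have "Vf \<inter> {1..?i} - insert ?i S = Vf \<inter> {1..k} - S"
      by (auto simp: le_Suc_eq)
    moreover have "?valid ({1..n} - insert ?i ?U)"
      using accepted(2) by (simp only: pinned_insert)
    ultimately have "proc_inv D n F d Vf c ?i (insert ?i S)"
      using S accepted(1) rejected_after_insert
      unfolding proc_inv_def U' by (simp add: subset_iff le_SucI)
    then show thesis
      using that[of "insert ?i S"] step accepted Valid_insert U' by simp
  next
    case rejected_now
    have U': "freed Vf S ?i = ?U"
      using rejected_now S by (auto simp: freed_def le_Suc_eq)
    have "Vf \<inter> {1..?i} - S = insert ?i (Vf \<inter> {1..k} - S)"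
      using rejected_now S by (auto simp: le_Suc_eq)
    then have "proc_inv D n F d Vf c ?i S"
      using S valid rejected rejected_now unfolding proc_inv_def U' by auto
    then show thesis
      using that[of S] step rejected_now Valid_insert U' by simp
  qed
qed

lemma proc_foldl_inv:
  assumes "finite D" "D \<noteq> {}" "referenced D n F Vf" "c \<in> points D n"
  shows "\<exists>S. foldl (proc_step D n F (fbin c F) Vf c) ({}, \<lambda>i. alpha {c i}) [1..<k+1]
      = (S, box D c (freed Vf S k)) \<and> proc_inv D n F (fbin c F) Vf c k S"
proof (induction k)
  case 0
  have "box D c (freed Vf {} 0) = (\<lambda>i. alpha {c i})"
    by (simp add: box_def freed_def)
  then show ?case
    using valid_expl_fix_all[OF assms(4)] by (auto simp: proc_inv_def freed_def)
next
  case (Suc k)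
  then obtain S where "foldl (proc_step D n F (fbin c F) Vf c) ({}, \<lambda>i. alpha {c i}) [1..<k+1]
      = (S, box D c (freed Vf S k))" and "proc_inv D n F (fbin c F) Vf c k S"
    by blast
  moreover obtain S' where "proc_step D n F (fbin c F) Vf c (S, box D c (freed Vf S k)) (Suc k)
       = (S', box D c (freed Vf S' (Suc k)))" "proc_inv D n F (fbin c F) Vf c (Suc k) S'"
    by (rule proc_inv_step[OF assms \<open>proc_inv D n F (fbin c F) Vf c k S\<close>])
  ultimately show ?case by auto
qed

lemma minimal_expl_if_proc_inv:
  assumes Vf: "Vf \<subseteq> {1..n}" and inv: "proc_inv D n F d Vf c n S"
  shows "minimal_expl D n F d (expl c (Vf - S))"
proof (rule minimal_expl_if_removals_invalid)
  have pinned: "{1..n} - freed Vf S n = Vf - S"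
    using Vf by (auto simp: freed_def)
  show "valid_expl D n F d (expl c (Vf - S))"
    using inv unfolding proc_inv_def pinned by blast
  fix p assume "p \<in> expl c (Vf - S)"
  then obtain i where "i \<in> Vf - S" "p = (i, c i)"
    unfolding expl_def by blast
  moreover have "\<not> valid_expl D n F d (expl c (Vf - S - {i}))"
    using inv \<open>i \<in> Vf - S\<close> Vf unfolding proc_inv_def pinned by blast
  ultimately show "\<not> valid_expl D n F d (expl c (Vf - S) - {p})"
    by (simp add: expl_Diff_singleton)
qed

theorem mainTheorem8:
  fixes D :: "real set" and n :: nat and F :: "tree list" and Vf :: "nat set"
    and c :: "nat \<Rightarrow> real" and d :: nat
  assumes "finite D" and "D \<noteq> {}"
    and "\<forall>T \<in> set F. is_tree D n T"
    and "referenced D n F Vf"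
    and "c \<in> points D n"
    and "d = fbin c F"
  shows "minimal_expl D n F d {(i, c i) | i. i \<in> procedure D n F Vf c}"
proof -
  obtain S where run: "foldl (proc_step D n F d Vf c) ({}, \<lambda>i. alpha {c i}) [1..<n+1]
      = (S, box D c (freed Vf S n))" and inv: "proc_inv D n F d Vf c n S"
    using proc_foldl_inv[OF assms(1,2,4,5), of n] assms(6) by blast
  have "procedure D n F Vf c = Vf - S"
    using run assms(6) by (simp add: procedure_def Let_def)
  moreover have "Vf \<subseteq> {1..n}"
    using assms(4) by (simp add: referenced_def)
  ultimately show ?thesis
    using minimal_expl_if_proc_inv[OF _ inv] by (simp add: expl_def)
qed

end
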